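(* Let $G\le \mathrm{GL}(d)$ be a connected linear semi-simple Lie group, let $g\in G$ and let $C_g\colon G\to G$, $C_g(x)=gxg^{-1}$. Let $g=ehu$ be the multiplicative Jordan decomposition of $g$. Then the recurrent set of $C_g$ is $$\mathcal R(C_g)=G_h\cap G_u.$$ Moreover, $C_g$ restricted to $\mathcal R(C_g)$ is an isometry for some distance.
   Context: The multiplicative Jordan decomposition writes $g=ehu$ with $e$ elliptic (diagonalizable over $\mathbb C$ with eigenvalues of modulus 1), $h$ hyperbolic (diagonalizable over $\mathbb R$ with positive eigenvalues), $u$ unipotent, pairwise commuting; for $g$ in a connected linear semi-simple group, $e,h,u\in G$. For $x\in G$, $G_x=\{y\in G: xy=yx\}$ is the centralizer of $x$ in $G$. The recurrent set of a map $\phi\colon X\to X$ is $\mathcal R(\phi)=\{x\in X:\ \exists\, n_k\to\infty \text{ with } \phi^{n_k}(x)\to x\}$. *)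

theory Defs
  imports "HOL-Analysis.Analysis"
begin

text \<open>Real d x d matrices are rendered as real^'n^'n with d = CARD('n).\<close>

fun mpow :: "('a::semiring_1)^'n^'n \<Rightarrow> nat \<Rightarrow> 'a^'n^'n" where
  "mpow A 0 = mat 1"
| "mpow A (Suc k) = A ** mpow A k"

definition mexp :: "real^'n^'n \<Rightarrow> real^'n^'n" where
  "mexp X = (\<Sum>k. (1 / fact k) *\<^sub>R mpow X k)"

definition lie_bracket :: "real^'n^'n \<Rightarrow> real^'n^'n \<Rightarrow> real^'n^'n" where
  "lie_bracket X Y = X ** Y - Y ** X"

definition lie_algebra_of :: "(real^'n^'n) set \<Rightarrow> (real^'n^'n) set" where
  "lie_algebra_of G = {X. \<forall>t::real. mexp (t *\<^sub>R X) \<in> G}"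

definition lie_ideal :: "(real^'n^'n) set \<Rightarrow> (real^'n^'n) set \<Rightarrow> bool" where
  "lie_ideal L I \<longleftrightarrow> subspace I \<and> I \<subseteq> L \<and> (\<forall>X\<in>L. \<forall>Y\<in>I. lie_bracket X Y \<in> I)"

fun derived_series :: "(real^'n^'n) set \<Rightarrow> nat \<Rightarrow> (real^'n^'n) set" where
  "derived_series I 0 = I"
| "derived_series I (Suc k) =
     span {lie_bracket X Y | X Y. X \<in> derived_series I k \<and> Y \<in> derived_series I k}"

definition solvable_lie :: "(real^'n^'n) set \<Rightarrow> bool" where
  "solvable_lie I \<longleftrightarrow> (\<exists>k. derived_series I k = {0})"

definition semisimple_lie :: "(real^'n^'n) set \<Rightarrow> bool" where
  "semisimple_lie L \<longleftrightarrow> (\<forall>I. lie_ideal L I \<and> solvable_lie I \<longrightarrow> I = {0})"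

definition matrix_subgroup :: "(real^'n^'n) set \<Rightarrow> bool" where
  "matrix_subgroup G \<longleftrightarrow> G \<subseteq> {A. invertible A} \<and> mat 1 \<in> G
     \<and> (\<forall>A\<in>G. \<forall>B\<in>G. A ** B \<in> G) \<and> (\<forall>A\<in>G. matrix_inv A \<in> G)"

definition connected_semisimple_linear_group :: "(real^'n^'n) set \<Rightarrow> bool" where
  "connected_semisimple_linear_group G \<longleftrightarrow>
     matrix_subgroup G \<and> closedin (top_of_set {A. invertible A}) G \<and> connected G
     \<and> semisimple_lie (lie_algebra_of G)"

definition cmat :: "real^'n^'n \<Rightarrow> complex^'n^'n" where
  "cmat A = (\<chi> i j. complex_of_real (A $ i $ j))"

definition is_diag :: "('a::zero)^'n^'n \<Rightarrow> bool" where
  "is_diag D \<longleftrightarrow> (\<forall>i j. i \<noteq> j \<longrightarrow> D $ i $ j = 0)"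

definition elliptic :: "real^'n^'n \<Rightarrow> bool" where
  "elliptic A \<longleftrightarrow> (\<exists>P D :: complex^'n^'n. invertible P \<and> is_diag D
      \<and> (\<forall>i. cmod (D $ i $ i) = 1) \<and> cmat A ** P = P ** D)"

definition hyperbolic :: "real^'n^'n \<Rightarrow> bool" where
  "hyperbolic A \<longleftrightarrow> (\<exists>P D :: real^'n^'n. invertible P \<and> is_diag D
      \<and> (\<forall>i. D $ i $ i > 0) \<and> A ** P = P ** D)"

definition unipotent :: "real^'n^'n \<Rightarrow> bool" where
  "unipotent A \<longleftrightarrow> (\<exists>k. mpow (A - mat 1) k = 0)"

definition centralizer :: "(real^'n^'n) set \<Rightarrow> real^'n^'n \<Rightarrow> (real^'n^'n) set" where
  "centralizer G x = {y \<in> G. x ** y = y ** x}"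

definition conj_map :: "real^'n^'n \<Rightarrow> real^'n^'n \<Rightarrow> real^'n^'n" where
  "conj_map g x = g ** x ** matrix_inv g"

definition recurrent_set :: "('a::topological_space \<Rightarrow> 'a) \<Rightarrow> 'a set \<Rightarrow> 'a set" where
  "recurrent_set \<phi> X = {x \<in> X. \<exists>n :: nat \<Rightarrow> nat. filterlim n at_top sequentially
      \<and> ((\<lambda>k. (\<phi> ^^ n k) x) \<longlongrightarrow> x) sequentially}"

end

theory Submission
  imports Defs
begin

text \<open>
  If \<open>x\<close> commutes with \<open>h\<close> and \<open>u\<close>, then \<open>C\<^sub>g\<^sup>n(x) = e\<^sup>n x e\<^sup>-\<^sup>n\<close>; the powers
  of \<open>e\<close> and \<open>e\<^sup>-\<^sup>1\<close> are bounded, hence return close to the identity along a common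
  sequence of times, so \<open>x\<close> is recurrent.  Conversely, diagonalise \<open>h = P D P\<^sup>-\<^sup>1\<close>;
  conjugation by \<open>D\<^sup>n\<close> scales the weight-\<open>l\<close> part of a matrix by \<open>l\<^sup>n\<close>, while
  conjugation by powers of \<open>e\<close> distorts norms only boundedly and conjugation by powers of
  the unipotent \<open>u\<close> grows polynomially along iterated commutators.  Projecting the
  recurrence onto weight parts and onto the top nonzero commutator with \<open>u\<close> rules out
  any weight \<open>l \<noteq> 1\<close> (geometric growth or decay) and any nonzero commutator with \<open>u\<close>
  (linear growth).  Finally, the supremum over \<open>n\<close> of \<open>\<parallel>e\<^sup>n (x - y) e\<^sup>-\<^sup>n\<parallel>\<close> is a metric,
  equivalent to the norm, for which \<open>C\<^sub>g\<close> is an isometry on the recurrent set.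
\<close>

lemma matrix_add_rdistrib:
  fixes A B :: "'a::semiring_1^'n^'m" and C :: "'a^'p^'n"
  shows "(A + B) ** C = A ** C + B ** C"
  by (vector matrix_matrix_mult_def sum.distrib[symmetric] field_simps)

lemma matrix_diff_rdistrib:
  fixes A B :: "'a::ring_1^'n^'m" and C :: "'a^'p^'n"
  shows "(A - B) ** C = A ** C - B ** C"
  by (vector matrix_matrix_mult_def sum_subtractf[symmetric] field_simps)

lemma matrix_diff_ldistrib:
  fixes C :: "'a::ring_1^'n^'m" and A B :: "'a^'p^'n"
  shows "C ** (A - B) = C ** A - C ** B"
  by (vector matrix_matrix_mult_def sum_subtractf[symmetric] field_simps)

lemma mpow_Suc_right: "mpow (A::'a::semiring_1^'n^'n) (Suc n) = mpow A n ** A"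
  by (induction n) (simp_all add: matrix_mul_assoc)

lemma mpow_add: "mpow (A::'a::semiring_1^'n^'n) (m + n) = mpow A m ** mpow A n"
  by (induction m) (simp_all add: matrix_mul_assoc)

lemma mpow_intertwine:
  fixes A Q D :: "'a::semiring_1^'n^'n"
  assumes "A ** Q = Q ** D"
  shows "mpow A n ** Q = Q ** mpow D n"
proof (induction n)
  case (Suc n)
  have "mpow A (Suc n) ** Q = A ** (Q ** mpow D n)"
    by (simp add: matrix_mul_assoc[symmetric] Suc)
  also have "\<dots> = Q ** mpow D (Suc n)"
    by (simp add: matrix_mul_assoc assms)
  finally show ?case .
qed simp

lemma mpow_mult_commuting:
  fixes A B :: "'a::semiring_1^'n^'n"
  assumes "A ** B = B ** A"
  shows "mpow (A ** B) n = mpow A n ** mpow B n"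
proof (induction n)
  case (Suc n)
  have "mpow (A ** B) (Suc n) = A ** (B ** mpow A n) ** mpow B n"
    by (simp add: Suc matrix_mul_assoc)
  also have "B ** mpow A n = mpow A n ** B"
    using mpow_intertwine[OF assms] by simp
  finally show ?case by (simp add: matrix_mul_assoc)
qed simp

lemma mpow_right_inverse:
  fixes A A' :: "'a::semiring_1^'n^'n"
  assumes "A ** A' = mat 1"
  shows "mpow A n ** mpow A' n = mat 1"
proof (induction n)
  case (Suc n)
  have "mpow A (Suc n) ** mpow A' (Suc n) = A ** mpow A n ** (mpow A' n ** A')"
    by (simp only: mpow.simps(2)[of A] mpow_Suc_right[of A'])
  also have "\<dots> = A ** (mpow A n ** mpow A' n) ** A'"
    by (simp only: matrix_mul_assoc)
  finally show ?case by (simp add: Suc assms)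
qed simp

lemma commute_inverse:
  fixes X Y Yi :: "'a::semiring_1^'n^'n"
  assumes "X ** Y = Y ** X" "Y ** Yi = mat 1" "Yi ** Y = mat 1"
  shows "X ** Yi = Yi ** X"
proof -
  have "Yi ** X = Yi ** (X ** Y) ** Yi"
    by (simp add: matrix_mul_assoc[symmetric] assms(2))
  also have "\<dots> = X ** Yi"
    by (simp add: assms(1) matrix_mul_assoc assms(3))
  finally show ?thesis by simp
qed

lemma matrix_inv_cancel:
  fixes A :: "'a::semiring_1^'n^'n"
  assumes "invertible A"
  shows "A ** matrix_inv A = mat 1" "matrix_inv A ** A = mat 1"
proof -
  have "\<exists>A'. A ** A' = mat 1 \<and> A' ** A = mat 1"
    using assms unfolding invertible_def by blast
  from someI_ex[OF this] show "A ** matrix_inv A = mat 1" "matrix_inv A ** A = mat 1"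
    unfolding matrix_inv_def by auto
qed

lemma similar_mult:
  fixes P Pi X Y :: "'a::semiring_1^'n^'n"
  assumes "P ** Pi = mat 1"
  shows "(Pi ** X ** P) ** (Pi ** Y ** P) = Pi ** (X ** Y) ** P"
proof -
  have "(Pi ** X ** P) ** (Pi ** Y ** P) = Pi ** X ** (P ** Pi) ** Y ** P"
    by (simp only: matrix_mul_assoc)
  then show ?thesis by (simp add: assms matrix_mul_assoc)
qed

lemma similar_mpow:
  fixes P Pi X :: "'a::semiring_1^'n^'n"
  assumes "P ** Pi = mat 1" "Pi ** P = mat 1"
  shows "mpow (Pi ** X ** P) n = Pi ** mpow X n ** P"
  by (induction n) (simp_all add: assms similar_mult)

lemma similar_cancel:
  fixes P Pi X :: "'a::semiring_1^'n^'n"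
  assumes "P ** Pi = mat 1"
  shows "P ** (Pi ** X ** P) ** Pi = X"
proof -
  have "P ** (Pi ** X ** P) ** Pi = (P ** Pi) ** X ** (P ** Pi)"
    by (simp only: matrix_mul_assoc)
  then show ?thesis by (simp add: assms)
qed

lemma similar_commute_iff:
  fixes P Pi X Y :: "'a::semiring_1^'n^'n"
  assumes "P ** Pi = mat 1"
  shows "(Pi ** X ** P) ** (Pi ** Y ** P) = (Pi ** Y ** P) ** (Pi ** X ** P) \<longleftrightarrow> X ** Y = Y ** X"
  by (metis assms similar_mult similar_cancel)

definition diag_mat :: "('n \<Rightarrow> 'a::zero) \<Rightarrow> 'a^'n^'n" where
  "diag_mat f = (\<chi> i j. if i = j then f i else 0)"

lemma diag_mat_mult_left: "(diag_mat f ** M) $ i $ j = f i * M $ i $ j"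
  by (simp add: matrix_matrix_mult_def diag_mat_def if_distrib if_distribR sum.delta cong: if_cong)

lemma diag_mat_mult_right: "(M ** diag_mat f) $ i $ j = M $ i $ j * f j"
  by (simp add: matrix_matrix_mult_def diag_mat_def if_distrib if_distribR sum.delta' cong: if_cong)

lemma diag_mat_mult: "diag_mat f ** diag_mat g = diag_mat (\<lambda>i. f i * g i)"
  by (simp add: vec_eq_iff diag_mat_mult_left) (simp add: diag_mat_def)

lemma diag_mat_one: "diag_mat (\<lambda>i. 1) = mat 1"
  by (simp add: vec_eq_iff diag_mat_def mat_def)

lemma mpow_diag_mat: "mpow (diag_mat f) n = diag_mat (\<lambda>i. f i ^ n)"
  by (induction n) (simp_all add: diag_mat_one diag_mat_mult)

lemma is_diag_eq_diag_mat: "is_diag D \<Longrightarrow> D = diag_mat (\<lambda>i. D $ i $ i)"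
  by (auto simp: is_diag_def diag_mat_def vec_eq_iff)

lemma commute_diag_mat_iff:
  fixes X :: "real^'n^'n" and d :: "'n \<Rightarrow> real"
  shows "X ** diag_mat d = diag_mat d ** X \<longleftrightarrow> (\<forall>i j. X $ i $ j \<noteq> 0 \<longrightarrow> d i = d j)"
  by (auto simp: vec_eq_iff diag_mat_mult_left diag_mat_mult_right mult.commute) metis+

lemma matrix_mult_bounded_bilinear:
  "bounded_bilinear ((**) :: ('a::{euclidean_space,real_algebra_1})^'n^'n \<Rightarrow> 'a^'n^'n \<Rightarrow> 'a^'n^'n)"
  unfolding bilinear_conv_bounded_bilinear[symmetric] bilinear_def
  by (auto intro!: linearI simp: matrix_add_ldistrib matrix_add_rdistrib
      matrix_scalar_ac scalar_matrix_assoc)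

lemma sandwich_bounded_linear:
  fixes A C :: "'a::{euclidean_space,real_algebra_1}^'n^'n"
  shows "bounded_linear (\<lambda>M. A ** M ** C)"
proof -
  interpret bounded_bilinear "(**) :: 'a^'n^'n \<Rightarrow> 'a^'n^'n \<Rightarrow> 'a^'n^'n"
    by (rule matrix_mult_bounded_bilinear)
  from bounded_linear_compose[OF bounded_linear_left bounded_linear_right]
  show ?thesis by (simp add: o_def)
qed

lemma tendsto_sandwich:
  fixes A C :: "real^'n^'n"
  assumes "(f \<longlongrightarrow> L) F"
  shows "((\<lambda>j. A ** f j ** C) \<longlongrightarrow> A ** L ** C) F"
  using bounded_linear.tendsto[OF sandwich_bounded_linear assms] .

lemma norm_le_entries:
  fixes M :: "'a::real_normed_vector^'n^'m"
  shows "norm M \<le> (\<Sum>i\<in>UNIV. \<Sum>j\<in>UNIV. norm (M $ i $ j))"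
proof -
  have "norm M \<le> (\<Sum>i\<in>UNIV. norm (M $ i))"
    unfolding norm_vec_def by (rule L2_set_le_sum) simp
  also have "\<dots> \<le> (\<Sum>i\<in>UNIV. \<Sum>j\<in>UNIV. norm (M $ i $ j))"
    unfolding norm_vec_def[of "M $ _"] by (intro sum_mono L2_set_le_sum) simp
  finally show ?thesis .
qed

lemma bounded_powers_conj_bounds:
  fixes a ai :: "real^'n^'n"
  assumes "bounded (range (mpow a))" "bounded (range (mpow ai))" "ai ** a = mat 1"
  obtains \<beta> where "\<And>n M. norm (mpow a n ** M ** mpow ai n) \<le> \<beta> * norm M"
    and "\<And>n M. norm M \<le> \<beta> * norm (mpow a n ** M ** mpow ai n)"
proof -
  obtain K where K0: "0 < K"
    and K: "\<And>X Y. norm ((X::real^'n^'n) ** (Y::real^'n^'n)) \<le> norm X * norm Y * K"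
    using bounded_bilinear.pos_bounded[OF matrix_mult_bounded_bilinear] by blast
  obtain Ba where Ba: "\<And>n. norm (mpow a n) \<le> Ba"
    using assms(1) by (auto simp: bounded_iff)
  obtain Bai where Bai: "\<And>n. norm (mpow ai n) \<le> Bai"
    using assms(2) by (auto simp: bounded_iff)
  define B where "B = max Ba Bai"
  have B: "norm (mpow a n) \<le> B" "norm (mpow ai n) \<le> B" for n
    using Ba[of n] Bai[of n] unfolding B_def by linarith+
  have B0: "0 \<le> B" using B(1)[of 0] norm_ge_zero order_trans by blast
  have sandwich: "norm (U ** M ** V) \<le> (B * B * K * K) * norm M"
    if U: "norm U \<le> B" and V: "norm V \<le> B" for U M V :: "real^'n^'n"
  proof -
    have "norm (U ** M ** V) \<le> norm (U ** M) * norm V * K" by (rule K)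
    also have "\<dots> \<le> (norm U * norm M * K) * B * K"
      using K0 by (intro mult_right_mono mult_mono K V) auto
    also have "\<dots> \<le> (B * norm M * K) * B * K"
      using K0 B0 by (intro mult_right_mono U) auto
    finally show ?thesis by (simp add: algebra_simps)
  qed
  show ?thesis
  proof
    show "norm (mpow a n ** M ** mpow ai n) \<le> B * B * K * K * norm M" for n M
      by (rule sandwich[OF B])
    show "norm M \<le> B * B * K * K * norm (mpow a n ** M ** mpow ai n)" for n M
    proof -
      have "mpow ai n ** (mpow a n ** M ** mpow ai n) ** mpow a n
          = (mpow ai n ** mpow a n) ** M ** (mpow ai n ** mpow a n)"
        by (simp only: matrix_mul_assoc)
      then have "mpow ai n ** (mpow a n ** M ** mpow ai n) ** mpow a n = M"
        by (simp add: mpow_right_inverse[OF assms(3)])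
      then show ?thesis using sandwich[OF B(2) B(1)] by metis
    qed
  qed
qed

lemma cmat_mult: "cmat (A ** B) = cmat A ** cmat B"
  by (simp add: cmat_def matrix_matrix_mult_def vec_eq_iff)

lemma cmat_one: "cmat (mat 1) = mat 1"
  by (simp add: cmat_def mat_def vec_eq_iff)

lemma cmat_mpow: "cmat (mpow A n) = mpow (cmat A) n"
  by (induction n) (simp_all add: cmat_mult cmat_one)

lemma norm_cmat: "norm (cmat A) = norm A"
  by (simp add: cmat_def norm_vec_def)

lemma elliptic_bounded_powers:
  fixes e :: "real^'n^'n"
  assumes "elliptic e"
  shows "bounded (range (mpow e))"
proof -
  obtain P D :: "complex^'n^'n" where P: "invertible P" and D: "is_diag D"
    and D1: "\<And>i. cmod (D $ i $ i) = 1" and eP: "cmat e ** P = P ** D"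
    using assms unfolding elliptic_def by blast
  define P' where "P' = matrix_inv P"
  have PP': "P ** P' = mat 1" using matrix_inv_cancel[OF P] by (simp add: P'_def)
  have cmat_powers: "cmat (mpow e n) = P ** mpow D n ** P'" for n
    using arg_cong[OF mpow_intertwine[OF eP, of n], of "\<lambda>M. M ** P'"]
    by (simp add: cmat_mpow PP' matrix_mul_assoc[symmetric])
  obtain \<delta> where D_eq: "D = diag_mat \<delta>"
    using is_diag_eq_diag_mat[OF D] by blast
  have \<delta>1: "cmod (\<delta> i) = 1" for i
    using D1[of i] by (simp add: D_eq diag_mat_def)
  have "norm (mpow D n) \<le> (\<Sum>i\<in>(UNIV::'n set). \<Sum>j\<in>(UNIV::'n set). 1)" for n
    by (intro order_trans[OF norm_le_entries] sum_mono)
      (simp add: D_eq mpow_diag_mat, simp add: diag_mat_def norm_power \<delta>1)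
  then have "bounded (range (mpow D))"
    unfolding bounded_iff by blast
  from bounded_linear_image[OF this sandwich_bounded_linear[of P P']]
  have "bounded (range (\<lambda>n. cmat (mpow e n)))"
    by (simp add: cmat_powers image_image)
  then show ?thesis
    by (simp add: bounded_iff norm_cmat)
qed

lemma elliptic_inverse:
  fixes e :: "real^'n^'n"
  assumes "elliptic e" and "invertible e"
  shows "elliptic (matrix_inv e)"
proof -
  obtain P D :: "complex^'n^'n" where P: "invertible P" and D: "is_diag D"
    and D1: "\<And>i. cmod (D $ i $ i) = 1" and eP: "cmat e ** P = P ** D"
    using assms unfolding elliptic_def by blast
  define Di :: "complex^'n^'n" where "Di = diag_mat (\<lambda>i. inverse (D $ i $ i))"
  have D_eq: "D = diag_mat (\<lambda>i. D $ i $ i)"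
    by (rule is_diag_eq_diag_mat[OF D])
  have "D $ i $ i \<noteq> 0" for i
    using D1[of i] by auto
  then have "diag_mat (\<lambda>i. D $ i $ i) ** Di = mat 1"
    by (simp add: Di_def diag_mat_mult flip: diag_mat_one)
  then have "D ** Di = mat 1"
    by (simp only: D_eq[symmetric])
  then have "cmat (matrix_inv e) ** P = cmat (matrix_inv e) ** cmat e ** P ** Di"
    by (simp add: eP matrix_mul_assoc[symmetric])
  also have "\<dots> = P ** Di"
    by (simp add: cmat_mult[symmetric] matrix_inv_cancel[OF assms(2)] cmat_one)
  finally show ?thesis
    unfolding elliptic_def using P D1
    by (intro exI[of _ P] exI[of _ Di]) (simp add: Di_def is_diag_def diag_mat_def norm_inverse)
qed

lemma tendsto_bounded_mult_null:
  fixes X Y :: "nat \<Rightarrow> real^'n^'n"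
  assumes "bounded (range X)" and "Y \<longlonglongrightarrow> 0"
  shows "(\<lambda>j. X j ** Y j) \<longlonglongrightarrow> 0"
proof -
  have "Bfun X sequentially"
    using assms(1) Bseq_eq_bounded by blast
  moreover have "Zfun Y sequentially"
    using assms(2) by (simp add: tendsto_Zfun_iff)
  ultimately have "Zfun (\<lambda>j. X j ** Y j) sequentially"
    by (rule bounded_bilinear.Bfun_prod_Zfun[OF matrix_mult_bounded_bilinear])
  then show ?thesis
    by (simp add: tendsto_Zfun_iff)
qed

lemma strict_mono_gap:
  assumes "strict_mono (r :: nat \<Rightarrow> nat)"
  shows "r m + k \<le> r (m + k)"
proof (induction k)
  case (Suc k)
  have "r (m + k) < r (m + Suc k)" using assms by (simp add: strict_mono_def)
  with Suc show ?case by simp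
qed simp

text \<open>When the inverse has bounded powers, the inverse powers return to the identity along
  any sequence of times along which the powers do: \<open>a\<^sup>-\<^sup>n - 1 = - a\<^sup>-\<^sup>n (a\<^sup>n - 1)\<close>.\<close>
lemma inverse_powers_return:
  fixes a ai :: "real^'n^'n"
  assumes bounded: "bounded (range (mpow ai))" and inverse: "ai ** a = mat 1"
    and a_return: "(\<lambda>j. mpow a (nk j)) \<longlonglongrightarrow> mat 1"
  shows "(\<lambda>j. mpow ai (nk j)) \<longlonglongrightarrow> mat 1"
proof -
  have "mpow ai (nk j) - mat 1 = - (mpow ai (nk j) ** (mpow a (nk j) - mat 1))" for j
    by (simp add: matrix_diff_ldistrib mpow_right_inverse[OF inverse])
  moreover have "(\<lambda>j. mpow ai (nk j) ** (mpow a (nk j) - mat 1)) \<longlonglongrightarrow> 0"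
  proof (rule tendsto_bounded_mult_null)
    show "bounded (range (\<lambda>j. mpow ai (nk j)))"
      by (rule bounded_subset[OF bounded]) auto
    show "(\<lambda>j. mpow a (nk j) - mat 1) \<longlonglongrightarrow> 0"
      using a_return by (rule LIM_zero)
  qed
  ultimately have "(\<lambda>j. mpow ai (nk j) - mat 1) \<longlonglongrightarrow> 0"
    using tendsto_minus[of "\<lambda>j. mpow ai (nk j) ** (mpow a (nk j) - mat 1)" 0] by simp
  then show ?thesis by (rule LIM_zero_cancel)
qed

text \<open>If the powers of \<open>a\<close> and of \<open>a\<^sup>-\<^sup>1\<close> are bounded, both return arbitrarily
  close to the identity along a common sequence of exponents tending to infinity:
  take a convergent subsequence \<open>a\<^bsup>r j\<^esup>\<close> and use the gaps \<open>r (2j) - r j\<close>.\<close>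
lemma bounded_powers_return:
  fixes a ai :: "real^'n^'n"
  assumes bounded: "bounded (range (mpow a))" "bounded (range (mpow ai))"
    and inverse: "ai ** a = mat 1"
  obtains nk where "filterlim nk at_top sequentially"
    and "(\<lambda>k. mpow a (nk k)) \<longlonglongrightarrow> mat 1" and "(\<lambda>k. mpow ai (nk k)) \<longlonglongrightarrow> mat 1"
proof -
  obtain l r where r: "strict_mono r" and lim: "(mpow a \<circ> r) \<longlonglongrightarrow> l"
    using bounded_imp_convergent_subsequence[OF bounded(1)] by blast
  define nk where "nk j = r (j + j) - r j" for j
  have r_split: "r (j + j) = r j + nk j" for j
    using strict_mono_gap[OF r, of j j] by (simp add: nk_def)
  have "j \<le> nk j" for j
    using strict_mono_gap[OF r, of j j] by (simp add: nk_def)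
  then have "filterlim nk at_top sequentially"
    by (intro filterlim_at_top_mono[OF filterlim_ident] always_eventually) simp
  moreover have a_return: "(\<lambda>j. mpow a (nk j)) \<longlonglongrightarrow> mat 1"
  proof -
    have "mpow a (nk j) - mat 1 = mpow ai (r j) ** (mpow a (r (j + j)) - mpow a (r j))" for j
    proof -
      have "mpow ai (r j) ** (mpow a (r (j + j)) - mpow a (r j))
          = mpow ai (r j) ** mpow a (r j) ** mpow a (nk j) - mpow ai (r j) ** mpow a (r j)"
        by (simp only: matrix_diff_ldistrib r_split mpow_add matrix_mul_assoc)
      then show ?thesis by (simp add: mpow_right_inverse[OF inverse])
    qed
    moreover have "(\<lambda>j. mpow a (r (j + j)) - mpow a (r j)) \<longlonglongrightarrow> 0"
      using tendsto_diff[OF LIMSEQ_subseq_LIMSEQ[OF lim, of "\<lambda>j. j + j"] lim]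
      by (simp add: strict_mono_def o_def)
    moreover have "bounded (range (\<lambda>j. mpow ai (r j)))"
      by (rule bounded_subset[OF bounded(2)]) auto
    ultimately have "(\<lambda>j. mpow a (nk j) - mat 1) \<longlonglongrightarrow> 0"
      using tendsto_bounded_mult_null[of "\<lambda>j. mpow ai (r j)"] by simp
    then show ?thesis by (rule LIM_zero_cancel)
  qed
  moreover have "(\<lambda>j. mpow ai (nk j)) \<longlonglongrightarrow> mat 1"
    by (rule inverse_powers_return[OF bounded(2) inverse a_return])
  ultimately show ?thesis using that by blast
qed

subsection \<open>Weight components\<close>

text \<open>Conjugation by a positive diagonal matrix \<open>diag_mat d\<close> scales the entry \<open>(i, j)\<close>
  by \<open>d i / d j\<close>.  The weight-\<open>l\<close> component keeps exactly the entries scaled by \<open>l\<close>;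
  it is the projection onto the \<open>l\<close>-eigenspace of that conjugation.\<close>
definition weight_part :: "('n \<Rightarrow> real) \<Rightarrow> real \<Rightarrow> real^'n^'n \<Rightarrow> real^'n^'n" where
  "weight_part d l M = (\<chi> i j. if d i / d j = l then M $ i $ j else 0)"

lemma weight_part_entry: "weight_part d l M $ i $ j = (if d i / d j = l then M $ i $ j else 0)"
  by (simp add: weight_part_def)

lemma linear_weight_part: "linear (weight_part d l)"
  by (rule linearI) (simp_all add: vec_eq_iff weight_part_entry)

lemma weight_part_mult_left:
  assumes "X ** diag_mat d = diag_mat d ** X"
  shows "weight_part d l (X ** M) = X ** weight_part d l M"
proof -
  have "X $ i $ k * (if d k / d j = l then M $ k $ j else 0)
      = (if d i / d j = l then X $ i $ k * M $ k $ j else 0)" for i j k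
    using assms unfolding commute_diag_mat_iff by (cases "X $ i $ k = 0") auto
  then show ?thesis
    by (simp add: vec_eq_iff weight_part_entry matrix_matrix_mult_def)
qed

lemma weight_part_mult_right:
  assumes "X ** diag_mat d = diag_mat d ** X"
  shows "weight_part d l (M ** X) = weight_part d l M ** X"
proof -
  have "(if d i / d k = l then M $ i $ k else 0) * X $ k $ j
      = (if d i / d j = l then M $ i $ k * X $ k $ j else 0)" for i j k
    using assms unfolding commute_diag_mat_iff by (cases "X $ k $ j = 0") auto
  then show ?thesis
    by (simp add: vec_eq_iff weight_part_entry matrix_matrix_mult_def)
qed

lemma weight_part_diag_conj:
  "weight_part d l (diag_mat (\<lambda>i. d i ^ n) ** M ** diag_mat (\<lambda>i. inverse (d i) ^ n))
     = l ^ n *\<^sub>R weight_part d l M"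
proof -
  have "d i ^ n * M $ i $ j * inverse (d j) ^ n = l ^ n * M $ i $ j" if "d i / d j = l" for i j
    using that by (simp add: power_mult_distrib[symmetric] divide_inverse mult_ac)
  then show ?thesis
    by (simp add: vec_eq_iff weight_part_entry diag_mat_mult_left diag_mat_mult_right)
qed

lemma weight_part_one:
  assumes "M ** diag_mat d = diag_mat d ** M" and "\<And>i. 0 < d i"
  shows "weight_part d 1 M = M"
proof -
  have "weight_part d 1 M $ i $ j = M $ i $ j" for i j
    using assms(1)[unfolded commute_diag_mat_iff] assms(2)[of j]
    by (cases "M $ i $ j = 0") (auto simp: weight_part_entry)
  then show ?thesis by (simp add: vec_eq_iff)
qed

lemma linear_lie_bracket: "linear (lie_bracket b)"
  by (rule linearI)
    (simp_all add: lie_bracket_def matrix_add_ldistrib matrix_add_rdistrib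
      matrix_scalar_ac scalar_matrix_assoc algebra_simps)

lemma linear_funpow:
  fixes f :: "'a::real_vector \<Rightarrow> 'a"
  assumes "linear f"
  shows "linear (f ^^ m)"
proof (induction m)
  case 0
  show ?case by (simp add: id_def linear_iff)
next
  case (Suc m)
  show ?case unfolding funpow.simps(2) by (rule linear_compose[OF Suc.IH assms])
qed

lemma lie_bracket_mult_right:
  assumes "X ** b = b ** X"
  shows "lie_bracket b (M ** X) = lie_bracket b M ** X"
  by (simp add: lie_bracket_def matrix_diff_rdistrib matrix_mul_assoc)
    (simp add: matrix_mul_assoc[symmetric] assms)

lemma funpow_sandwich:
  assumes "\<And>M. f (X ** M ** Y) = X ** f M ** Y"
  shows "(f ^^ m) (X ** M ** Y) = X ** (f ^^ m) M ** Y"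
  by (induction m) (simp_all add: assms)

lemma lie_bracket_sandwich:
  assumes "X ** b = b ** X" and "Y ** b = b ** Y"
  shows "lie_bracket b (X ** M ** Y) = X ** lie_bracket b M ** Y"
  by (simp add: lie_bracket_def matrix_diff_ldistrib matrix_diff_rdistrib matrix_mul_assoc assms)
    (simp add: matrix_mul_assoc[symmetric] assms)

lemma projection_sandwich:
  assumes "X ** b = b ** X" "Y ** b = b ** Y"
    and "X ** diag_mat d = diag_mat d ** X" "Y ** diag_mat d = diag_mat d ** Y"
  shows "(lie_bracket b ^^ m) (weight_part d l (X ** M ** Y))
       = X ** (lie_bracket b ^^ m) (weight_part d l M) ** Y"
  by (simp add: weight_part_mult_left weight_part_mult_right assms
      funpow_sandwich lie_bracket_sandwich)

lemma lie_bracket_minus_one: "lie_bracket (b - mat 1) = lie_bracket b"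
  by (rule ext) (simp add: lie_bracket_def matrix_diff_ldistrib matrix_diff_rdistrib)

text \<open>If \<open>N\<^sup>p M = 0\<close> and \<open>M N\<^sup>q = 0\<close>, then \<open>p + q\<close> commutators with \<open>N\<close> kill \<open>M\<close>:
  one commutator replaces \<open>M\<close> by \<open>N M\<close> and \<open>M N\<close>, which satisfy the same hypothesis
  with \<open>p\<close>, respectively \<open>q\<close>, lowered by one.\<close>
lemma lie_bracket_nilpotent:
  fixes N M :: "real^'n^'n"
  assumes "mpow N p ** M = 0" and "M ** mpow N q = 0"
  shows "(lie_bracket N ^^ (p + q)) M = 0"
  using assms
proof (induction "p + q" arbitrary: p q M)
  case 0
  then show ?case by simp
next
  case (Suc s)
  show ?case
  proof (cases "p = 0 \<or> q = 0")
    case True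
    then have "M = 0" using Suc.prems by auto
    then show ?thesis using linear_0[OF linear_funpow[OF linear_lie_bracket]] by simp
  next
    case False
    then obtain p' q' where p: "p = Suc p'" and q: "q = Suc q'"
      by (metis not0_implies_Suc)
    have left: "(lie_bracket N ^^ s) (N ** M) = 0"
    proof -
      have "s = p' + q" using Suc.hyps(2) p by simp
      moreover have "mpow N p' ** (N ** M) = 0"
        using Suc.prems(1) by (simp only: p mpow_Suc_right matrix_mul_assoc)
      moreover have "(N ** M) ** mpow N q = 0"
        using Suc.prems(2) by (simp add: matrix_mul_assoc[symmetric])
      ultimately show ?thesis using Suc.hyps(1) by simp
    qed
    have right: "(lie_bracket N ^^ s) (M ** N) = 0"
    proof -
      have "s = p + q'" using Suc.hyps(2) q by simp
      moreover have "(M ** N) ** mpow N q' = 0"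
        using Suc.prems(2) by (simp only: q mpow.simps(2) matrix_mul_assoc)
      ultimately show ?thesis using Suc.hyps(1) Suc.prems(1) by (simp add: matrix_mul_assoc)
    qed
    have "(lie_bracket N ^^ (p + q)) M = (lie_bracket N ^^ s) (N ** M - M ** N)"
      by (simp only: Suc.hyps(2)[symmetric] funpow_Suc_right o_apply lie_bracket_def)
    also have "\<dots> = (lie_bracket N ^^ s) (N ** M) - (lie_bracket N ^^ s) (M ** N)"
      by (rule linear_diff[OF linear_funpow[OF linear_lie_bracket]])
    finally show ?thesis
      by (simp add: left right)
  qed
qed

lemma unipotent_lie_bracket_nilpotent:
  assumes "unipotent b"
  obtains K where "\<And>M. (lie_bracket b ^^ K) M = 0"
proof -
  obtain k where "mpow (b - mat 1) k = 0"
    using assms unfolding unipotent_def by blast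
  then have "(lie_bracket (b - mat 1) ^^ (k + k)) M = 0" for M
    by (intro lie_bracket_nilpotent) simp_all
  then show ?thesis
    using that[of "k + k"] by (simp add: lie_bracket_minus_one)
qed

lemma funpow_last_nonzero:
  assumes "(f ^^ K) v = 0" and "v \<noteq> 0"
  obtains m where "(f ^^ m) v \<noteq> 0" and "f ((f ^^ m) v) = 0"
proof -
  have "\<exists>m. (f ^^ m) v \<noteq> 0 \<and> (f ^^ Suc m) v = 0"
    using assms by (induction K) auto
  then show ?thesis using that by auto
qed

lemma conj_powers_commuting:
  assumes "b ** w = w ** b" and "b ** bi = mat 1"
  shows "mpow b n ** w ** mpow bi n = w"
proof -
  have "mpow b n ** w ** mpow bi n = w ** (mpow b n ** mpow bi n)"
    using mpow_intertwine[OF assms(1), of n] by (simp add: matrix_mul_assoc)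
  then show ?thesis by (simp add: mpow_right_inverse[OF assms(2)])
qed

lemma conj_powers_shear:
  assumes "lie_bracket b (lie_bracket b w) = 0" and "b ** bi = mat 1" and "bi ** b = mat 1"
  shows "mpow b n ** w ** mpow bi n = w + real n *\<^sub>R (lie_bracket b w ** bi)"
proof -
  define z where "z = lie_bracket b w ** bi"
  have "lie_bracket b z = 0"
    using lie_bracket_mult_right[of bi b "lie_bracket b w"] assms by (simp add: z_def)
  then have bzb: "b ** z ** bi = z"
    using conj_powers_commuting[of b z bi 1] assms(2) by (simp add: lie_bracket_def)
  have bwb: "b ** w ** bi = w + z"
    by (simp add: z_def lie_bracket_def matrix_diff_rdistrib matrix_mul_assoc[symmetric] assms(2))
  have "mpow b n ** w ** mpow bi n = w + real n *\<^sub>R z"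
  proof (induction n)
    case (Suc n)
    have "mpow b (Suc n) ** w ** mpow bi (Suc n) = b ** (mpow b n ** w ** mpow bi n) ** bi"
      by (simp only: mpow.simps(2)[of b] mpow_Suc_right[of bi] matrix_mul_assoc)
    also have "\<dots> = b ** w ** bi + real n *\<^sub>R (b ** z ** bi)"
      by (simp add: Suc matrix_add_ldistrib matrix_add_rdistrib matrix_scalar_ac
          scalar_matrix_assoc)
    finally show ?case
      by (simp add: bwb bzb algebra_simps)
  qed simp
  then show ?thesis by (simp add: z_def)
qed

subsection \<open>Uniformly bounded families of maps cannot support growth\<close>

lemma power_exceeds:
  fixes l c :: real
  assumes "1 < l" and nk: "filterlim nk at_top sequentially"
  obtains j where "c < l ^ nk j"
proof -
  obtain N :: nat where N: "c / (l - 1) < real N"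
    using reals_Archimedean2 by blast
  obtain j where j: "N \<le> nk j"
    using nk unfolding filterlim_at_top eventually_sequentially by blast
  have "c < real N * (l - 1)"
    using N assms(1) by (simp add: pos_divide_less_eq)
  also have "\<dots> \<le> real (nk j) * (l - 1)"
    using j assms(1) by (intro mult_right_mono) auto
  also have "\<dots> \<le> 1 + real (nk j) * (l - 1)"
    by simp
  also have "\<dots> \<le> l ^ nk j"
    using Bernoulli_inequality[of "l - 1" "nk j"] assms(1) by simp
  finally show ?thesis using that by blast
qed

lemma no_geometric_recurrence:
  fixes S :: "nat \<Rightarrow> 'a::real_normed_vector \<Rightarrow> 'a"
  assumes lower: "\<And>n x. norm x \<le> \<beta> * norm (S n x)"
    and upper: "\<And>n x. norm (S n x) \<le> \<beta> * norm x"
    and l: "0 < l" and w: "w \<noteq> 0" and nk: "filterlim nk at_top sequentially"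
    and lim: "(\<lambda>j. l ^ nk j *\<^sub>R S (nk j) w) \<longlonglongrightarrow> w"
  shows "l = 1"
proof (rule ccontr)
  assume "l \<noteq> 1"
  have \<beta>: "0 < \<beta>"
  proof (rule ccontr)
    assume "\<not> 0 < \<beta>"
    then have "\<beta> * norm (S 0 w) \<le> 0" by (simp add: mult_nonpos_nonneg)
    with lower[of w 0] have "norm w \<le> 0" by linarith
    with w show False by simp
  qed
  have norm_f: "norm (l ^ nk j *\<^sub>R S (nk j) w) = l ^ nk j * norm (S (nk j) w)" for j
    using l by simp
  show False
  proof (cases "1 < l")
    case True
    obtain K where K: "\<And>j. norm (l ^ nk j *\<^sub>R S (nk j) w) \<le> K"
      using convergent_imp_Bseq[OF convergentI[OF lim]] unfolding Bseq_def by auto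
    define c where "c = K * \<beta> / norm w"
    obtain j where j: "c < l ^ nk j"
      using power_exceeds[OF True nk] by blast
    have "norm w / \<beta> \<le> norm (S (nk j) w)"
      using lower[of w "nk j"] \<beta> by (simp add: divide_le_eq mult.commute)
    then have "l ^ nk j * (norm w / \<beta>) \<le> l ^ nk j * norm (S (nk j) w)"
      using l by (intro mult_left_mono) auto
    also have "\<dots> \<le> K"
      using K[of j] by (simp only: norm_f)
    finally have "l ^ nk j * (norm w / \<beta>) \<le> K" .
    moreover have "K = c * (norm w / \<beta>)"
      using \<beta> w by (simp add: c_def)
    moreover have "c * (norm w / \<beta>) < l ^ nk j * (norm w / \<beta>)"
      using j \<beta> w by (intro mult_strict_right_mono) auto
    ultimately show False by simp
  next
    case False
    with \<open>l \<noteq> 1\<close> l have "norm l < 1" by simp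
    from filterlim_compose[OF LIMSEQ_power_zero[OF this] nk]
    have "(\<lambda>j. l ^ nk j) \<longlonglongrightarrow> 0" .
    then have g0: "(\<lambda>j. l ^ nk j * (\<beta> * norm w)) \<longlonglongrightarrow> 0"
      by (rule tendsto_mult_left_zero)
    have "norm (l ^ nk j *\<^sub>R S (nk j) w) \<le> l ^ nk j * (\<beta> * norm w)" for j
      unfolding norm_f using upper[of "nk j" w] l by (intro mult_left_mono) auto
    then have "eventually (\<lambda>j. norm (l ^ nk j *\<^sub>R S (nk j) w) \<le> l ^ nk j * (\<beta> * norm w)) sequentially"
      by (intro always_eventually allI)
    from Lim_null_comparison[OF this g0] have "w = 0"
      using LIMSEQ_unique[OF lim] by blast
    with w show False by simp
  qed
qed

lemma no_linear_recurrence: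
  fixes S :: "nat \<Rightarrow> 'a::real_normed_vector \<Rightarrow> 'a"
  assumes lower: "\<And>n x. norm x \<le> \<beta> * norm (S n x)"
    and nk: "filterlim nk at_top sequentially"
    and conv: "convergent (\<lambda>j. S (nk j) (w + real (nk j) *\<^sub>R z))"
  shows "z = 0"
proof (rule ccontr)
  assume z: "z \<noteq> 0"
  obtain K where K: "\<And>j. norm (S (nk j) (w + real (nk j) *\<^sub>R z)) \<le> K"
    using convergent_imp_Bseq[OF conv] unfolding Bseq_def by auto
  obtain N :: nat where N: "(\<bar>\<beta>\<bar> * \<bar>K\<bar> + norm w) / norm z < real N"
    using reals_Archimedean2 by blast
  obtain j where j: "N \<le> nk j"
    using nk unfolding filterlim_at_top eventually_sequentially by blast
  have "real (nk j) * norm z - norm w \<le> norm (w + real (nk j) *\<^sub>R z)"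
    using norm_triangle_ineq2[of "real (nk j) *\<^sub>R z" "- w"] by (simp add: algebra_simps)
  also have "\<dots> \<le> \<beta> * norm (S (nk j) (w + real (nk j) *\<^sub>R z))"
    by (rule lower)
  also have "\<dots> \<le> \<bar>\<beta>\<bar> * norm (S (nk j) (w + real (nk j) *\<^sub>R z))"
    by (intro mult_right_mono abs_ge_self norm_ge_zero)
  also have "\<dots> \<le> \<bar>\<beta>\<bar> * \<bar>K\<bar>"
    using K[of j] by (intro mult_left_mono) auto
  finally have "real (nk j) * norm z \<le> \<bar>\<beta>\<bar> * \<bar>K\<bar> + norm w" by simp
  moreover have "\<bar>\<beta>\<bar> * \<bar>K\<bar> + norm w < real N * norm z"
    using N z by (simp add: pos_divide_less_eq)
  moreover have "real N * norm z \<le> real (nk j) * norm z"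
    using j by (simp add: mult_right_mono)
  ultimately show False by simp
qed

lemma openin_top_of_set_if_dominated:
  fixes R :: "'a::metric_space set"
  assumes "Metric_space R d" and "0 < C"
    and upper: "\<And>x y. x \<in> R \<Longrightarrow> y \<in> R \<Longrightarrow> d x y \<le> C * dist x y"
    and S: "openin (Metric_space.mtopology R d) S"
  shows "openin (top_of_set R) S"
  unfolding openin_euclidean_subtopology_iff
proof (intro conjI ballI)
  interpret M: Metric_space R d by (rule assms(1))
  show "S \<subseteq> R" using S M.openin_mtopology by blast
  fix x assume x: "x \<in> S"
  then obtain r where r: "0 < r" "M.mball x r \<subseteq> S"
    using S M.openin_mtopology by blast
  have "x' \<in> S" if "x' \<in> R" "dist x' x < r / C" for x'
  proof -
    have "d x x' \<le> C * dist x x'"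
      using upper \<open>S \<subseteq> R\<close> x that(1) by blast
    also have "\<dots> < r"
      using that(2) assms(2) by (simp add: dist_commute field_simps)
    finally have "x' \<in> M.mball x r"
      using \<open>S \<subseteq> R\<close> x that(1) by (auto simp: M.in_mball)
    with r(2) show ?thesis by blast
  qed
  then show "\<exists>e>0. \<forall>x'\<in>R. dist x' x < e \<longrightarrow> x' \<in> S"
    using r(1) assms(2) by (intro exI[of _ "r / C"]) auto
qed

lemma openin_mtopology_if_dominating:
  fixes R :: "'a::metric_space set"
  assumes "Metric_space R d"
    and lower: "\<And>x y. x \<in> R \<Longrightarrow> y \<in> R \<Longrightarrow> dist x y \<le> d x y"
    and S: "openin (top_of_set R) S"
  shows "openin (Metric_space.mtopology R d) S"
proof -
  interpret M: Metric_space R d by (rule assms(1))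
  show ?thesis
    unfolding M.openin_mtopology
  proof (intro conjI allI impI)
    show "S \<subseteq> R" using S by (simp add: openin_euclidean_subtopology_iff)
    fix x assume x: "x \<in> S"
    then obtain e where e: "0 < e" "\<And>x'. x' \<in> R \<Longrightarrow> dist x' x < e \<Longrightarrow> x' \<in> S"
      using S unfolding openin_euclidean_subtopology_iff by blast
    have "M.mball x e \<subseteq> S"
    proof
      fix x' assume "x' \<in> M.mball x e"
      then have "x' \<in> R" "x \<in> R" "d x x' < e" by auto
      with lower[of x x'] show "x' \<in> S"
        by (intro e(2)) (auto simp: dist_commute)
    qed
    then show "\<exists>r>0. M.mball x r \<subseteq> S" using e(1) by blast
  qed
qed

lemma mtopology_eq_top_of_set:
  fixes R :: "'a::metric_space set"
  assumes "Metric_space R d" and "0 < C"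
    and "\<And>x y. x \<in> R \<Longrightarrow> y \<in> R \<Longrightarrow> dist x y \<le> d x y"
    and "\<And>x y. x \<in> R \<Longrightarrow> y \<in> R \<Longrightarrow> d x y \<le> C * dist x y"
  shows "Metric_space.mtopology R d = top_of_set R"
  using openin_top_of_set_if_dominated[OF assms(1,2,4)] openin_mtopology_if_dominating[OF assms(1,3)]
  by (auto simp: topology_eq)

subsection \<open>The orbit norm of a recurrent family of linear maps\<close>

text \<open>For a family \<open>E n\<close> of uniformly bounded linear maps, the supremum of the norms along
  an orbit is an equivalent norm.\<close>
definition orbit_norm :: "(nat \<Rightarrow> 'a::real_normed_vector \<Rightarrow> 'a) \<Rightarrow> 'a \<Rightarrow> real" where
  "orbit_norm E v = (SUP n. norm (E n v))"

locale recurrent_linear_family =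
  fixes E :: "nat \<Rightarrow> 'a::real_normed_vector \<Rightarrow> 'a" and \<beta> :: real
  assumes linear: "\<And>n. linear (E n)"
    and E0: "\<And>x. E 0 x = x"
    and bounded: "\<And>n x. norm (E n x) \<le> \<beta> * norm x"
    and shift: "\<And>n x. E n (E 1 x) = E (Suc n) x"
    and recurrent: "\<And>x. \<exists>nk. filterlim nk at_top sequentially \<and> (\<lambda>j. E (nk j) x) \<longlonglongrightarrow> x"
begin

lemma bdd_orbit: "bdd_above (range (\<lambda>n. norm (E n v)))"
  using bounded by (intro bdd_aboveI2) blast

lemma norm_le_orbit_norm: "norm (E n v) \<le> orbit_norm E v"
  unfolding orbit_norm_def by (rule cSUP_upper[OF UNIV_I bdd_orbit])

lemma orbit_norm_le: "orbit_norm E v \<le> max \<beta> 1 * norm v"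
  unfolding orbit_norm_def
proof (rule cSUP_least)
  fix n
  have "\<beta> * norm v \<le> max \<beta> 1 * norm v" by (intro mult_right_mono) auto
  then show "norm (E n v) \<le> max \<beta> 1 * norm v" using bounded[of n v] by linarith
qed simp

lemma orbit_norm_diff_triangle: "orbit_norm E (x - z) \<le> orbit_norm E (x - y) + orbit_norm E (y - z)"
  unfolding orbit_norm_def[of E "x - z"]
proof (rule cSUP_least)
  fix n
  have "norm (E n (x - z)) = norm (E n (x - y) + E n (y - z))"
    using linear_add[OF linear, of n "x - y" "y - z"] by simp
  also have "\<dots> \<le> orbit_norm E (x - y) + orbit_norm E (y - z)"
    by (intro order_trans[OF norm_triangle_ineq] add_mono norm_le_orbit_norm)
  finally show "norm (E n (x - z)) \<le> orbit_norm E (x - y) + orbit_norm E (y - z)" .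
qed simp

lemma orbit_norm_minus: "orbit_norm E (- v) = orbit_norm E v"
  unfolding orbit_norm_def by (simp add: linear_neg[OF linear])

text \<open>The point \<open>v\<close> itself (\<open>n = 0\<close>) is approached by the later orbit points, so
  dropping it from the supremum does not change the value.\<close>
lemma orbit_norm_shift: "orbit_norm E (E 1 v) = orbit_norm E v"
proof (rule antisym)
  show "orbit_norm E (E 1 v) \<le> orbit_norm E v"
    unfolding orbit_norm_def[of E "E 1 v"] shift
    by (rule cSUP_least) (simp_all add: norm_le_orbit_norm)
  have tail: "norm (E (Suc m) v) \<le> orbit_norm E (E 1 v)" for m
    using norm_le_orbit_norm[of m "E 1 v"] by (simp only: shift)
  show "orbit_norm E v \<le> orbit_norm E (E 1 v)"
    unfolding orbit_norm_def[of E v]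
  proof (rule cSUP_least)
    fix n
    show "norm (E n v) \<le> orbit_norm E (E 1 v)"
    proof (cases n)
      case 0
      obtain nk where nk: "filterlim nk at_top sequentially"
        and lim: "(\<lambda>j. E (nk j) v) \<longlonglongrightarrow> v"
        using recurrent by blast
      have "eventually (\<lambda>j. 1 \<le> nk j) sequentially"
        using nk unfolding filterlim_at_top by blast
      then have "eventually (\<lambda>j. norm (E (nk j) v) \<le> orbit_norm E (E 1 v)) sequentially"
      proof eventually_elim
        case (elim j)
        then have "nk j = Suc (nk j - 1)" by simp
        then show ?case using tail[of "nk j - 1"] by simp
      qed
      from tendsto_upperbound[OF tendsto_norm[OF lim] this] 0 show ?thesis
        by (simp add: E0)
    next
      case (Suc m)
      then show ?thesis using tail[of m] by (simp only:)
    qed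
  qed simp
qed

theorem isometric_metric:
  assumes phi: "\<And>x. x \<in> R \<Longrightarrow> \<phi> x = E 1 x"
  shows "\<exists>d. Metric_space R d \<and> Metric_space.mtopology R d = top_of_set R
           \<and> (\<forall>x\<in>R. \<forall>y\<in>R. d (\<phi> x) (\<phi> y) = d x y)"
proof (intro exI conjI)
  define d where "d x y = orbit_norm E (x - y)" for x y
  have lower: "dist x y \<le> d x y" for x y
    using norm_le_orbit_norm[of 0 "x - y"] by (simp add: d_def E0 dist_norm)
  have upper: "d x y \<le> max \<beta> 1 * dist x y" for x y
    using orbit_norm_le by (simp add: d_def dist_norm)
  show metric: "Metric_space R d"
  proof
    show "0 \<le> d x y" for x y using lower[of x y] zero_le_dist order_trans by blast
    show "d x y = d y x" for x y using orbit_norm_minus[of "x - y"] by (simp add: d_def)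
    show "d x y = 0 \<longleftrightarrow> x = y" for x y
      using lower[of x y] upper[of x y] by (auto intro: antisym)
    show "d x z \<le> d x y + d y z" for x y z
      unfolding d_def by (rule orbit_norm_diff_triangle)
  qed
  show "Metric_space.mtopology R d = top_of_set R"
    by (rule mtopology_eq_top_of_set[OF metric _ lower upper]) simp
  show "\<forall>x\<in>R. \<forall>y\<in>R. d (\<phi> x) (\<phi> y) = d x y"
    using phi orbit_norm_shift by (simp add: d_def linear_diff[OF linear, symmetric])
qed

end

subsection \<open>Recurrence for a matrix in Jordan form\<close>

locale jordan_recurrence =
  fixes a ai b bi c ci y :: "real^'n^'n" and d :: "'n \<Rightarrow> real" and nk :: "nat \<Rightarrow> nat"
  assumes d_pos: "\<And>i. 0 < d i"
    and a_inverse: "a ** ai = mat 1" "ai ** a = mat 1"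
    and b_inverse: "b ** bi = mat 1" "bi ** b = mat 1"
    and c_factor: "c = a ** diag_mat d ** b" and c_inverse: "c ** ci = mat 1"
    and a_bounded: "bounded (range (mpow a))" "bounded (range (mpow ai))"
    and b_unipotent: "unipotent b"
    and commute: "a ** diag_mat d = diag_mat d ** a" "b ** diag_mat d = diag_mat d ** b"
      "a ** b = b ** a"
    and nk: "filterlim nk at_top sequentially"
    and recurrent: "(\<lambda>j. mpow c (nk j) ** y ** mpow ci (nk j)) \<longlonglongrightarrow> y"
begin

lemma power_commute:
  "mpow a n ** b = b ** mpow a n" "mpow ai n ** b = b ** mpow ai n"
  "mpow b n ** b = b ** mpow b n" "mpow bi n ** b = b ** mpow bi n"
  "mpow a n ** diag_mat d = diag_mat d ** mpow a n" "mpow ai n ** diag_mat d = diag_mat d ** mpow ai n"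
  "mpow b n ** diag_mat d = diag_mat d ** mpow b n" "mpow bi n ** diag_mat d = diag_mat d ** mpow bi n"
  using commute_inverse[OF commute(3)[symmetric] a_inverse, symmetric]
    commute_inverse[OF _ b_inverse, of b]
    commute_inverse[OF commute(1)[symmetric] a_inverse, symmetric]
    commute_inverse[OF commute(2)[symmetric] b_inverse, symmetric]
  by (simp_all add: mpow_intertwine commute)

lemma conj_power_factor:
  "mpow c n ** M ** mpow ci n
     = mpow a n ** (diag_mat (\<lambda>i. d i ^ n) ** (mpow b n ** M ** mpow bi n)
         ** diag_mat (\<lambda>i. inverse (d i) ^ n)) ** mpow ai n"
proof -
  define Dn Di where "Dn = diag_mat (\<lambda>i. d i ^ n)" and "Di = diag_mat (\<lambda>i. inverse (d i) ^ n)"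
  have "(a ** diag_mat d) ** b = b ** (a ** diag_mat d)"
    by (metis commute(2,3) matrix_mul_assoc)
  then have "mpow c n = mpow (a ** diag_mat d) n ** mpow b n"
    unfolding c_factor by (rule mpow_mult_commuting)
  also have "mpow (a ** diag_mat d) n = mpow a n ** mpow (diag_mat d) n"
    by (rule mpow_mult_commuting[OF commute(1)])
  finally have c_power: "mpow c n = mpow a n ** Dn ** mpow b n"
    by (simp add: mpow_diag_mat Dn_def)
  have "inverse (d i) * d i = 1" for i
    using d_pos[of i] by simp
  then have DiDn: "Di ** Dn = mat 1"
    by (simp add: Dn_def Di_def diag_mat_mult power_mult_distrib[symmetric] flip: diag_mat_one)
  have "(mpow bi n ** Di ** mpow ai n) ** mpow c n
      = mpow bi n ** Di ** (mpow ai n ** mpow a n) ** Dn ** mpow b n"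
    by (simp only: c_power matrix_mul_assoc)
  also have "\<dots> = mpow bi n ** (Di ** Dn) ** mpow b n"
    by (simp add: mpow_right_inverse[OF a_inverse(2)] matrix_mul_assoc)
  also have "\<dots> = mat 1"
    by (simp add: DiDn mpow_right_inverse[OF b_inverse(2)])
  finally have "(mpow bi n ** Di ** mpow ai n) ** mpow c n = mat 1" .
  then have "mpow ci n = mpow bi n ** Di ** mpow ai n"
    using mpow_right_inverse[OF c_inverse, of n]
    by (metis matrix_mul_assoc matrix_mul_lid matrix_mul_rid)
  then show ?thesis
    by (simp add: c_power Dn_def Di_def matrix_mul_assoc)
qed

lemma projected_orbit:
  "(lie_bracket b ^^ m) (weight_part d l (mpow c n ** y ** mpow ci n))
     = l ^ n *\<^sub>R (mpow a n ** (mpow b n ** (lie_bracket b ^^ m) (weight_part d l y) ** mpow bi n)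
         ** mpow ai n)"
proof -
  have scale: "(lie_bracket b ^^ m) (r *\<^sub>R M) = r *\<^sub>R (lie_bracket b ^^ m) M" for r M
    by (rule linear_scale[OF linear_funpow[OF linear_lie_bracket]])
  have sandwich_scale: "X ** (r *\<^sub>R M) ** Y = r *\<^sub>R (X ** M ** Y)" for X M Y :: "real^'n^'n" and r
    by (simp add: matrix_scalar_ac scalar_matrix_assoc)
  show ?thesis
    unfolding conj_power_factor
    by (simp only: projection_sandwich power_commute weight_part_diag_conj scale sandwich_scale)
qed

lemma projected_recurrence:
  "(\<lambda>j. (lie_bracket b ^^ m) (weight_part d l (mpow c (nk j) ** y ** mpow ci (nk j))))
     \<longlonglongrightarrow> (lie_bracket b ^^ m) (weight_part d l y)"
proof -
  have "linear ((lie_bracket b ^^ m) \<circ> weight_part d l)"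
    by (rule linear_compose[OF linear_weight_part linear_funpow[OF linear_lie_bracket]])
  then have "bounded_linear ((lie_bracket b ^^ m) \<circ> weight_part d l)"
    by (simp add: linear_conv_bounded_linear)
  from bounded_linear.tendsto[OF this recurrent] show ?thesis by simp
qed

lemma conj_a_bounds:
  obtains \<beta> where "\<And>n M. norm (mpow a n ** M ** mpow ai n) \<le> \<beta> * norm M"
    and "\<And>n M. norm M \<le> \<beta> * norm (mpow a n ** M ** mpow ai n)"
  using bounded_powers_conj_bounds[OF a_bounded a_inverse(2)] by blast

text \<open>Weight components of \<open>y\<close> other than \<open>1\<close> vanish: otherwise the top nonzero
  commutator \<open>w\<close> of such a component would satisfy \<open>l\<^sup>n a\<^sup>n w a\<^sup>-\<^sup>n \<longrightarrow> w\<close>.\<close>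
lemma weight_part_vanishes:
  assumes "0 < l" and "l \<noteq> 1"
  shows "weight_part d l y = 0"
proof (rule ccontr)
  assume nonzero: "weight_part d l y \<noteq> 0"
  obtain K where "\<And>M. (lie_bracket b ^^ K) M = 0"
    using unipotent_lie_bracket_nilpotent[OF b_unipotent] by blast
  then obtain m where w: "(lie_bracket b ^^ m) (weight_part d l y) \<noteq> 0"
    and top: "lie_bracket b ((lie_bracket b ^^ m) (weight_part d l y)) = 0"
    using funpow_last_nonzero[OF _ nonzero] by metis
  define w where "w = (lie_bracket b ^^ m) (weight_part d l y)"
  have fixed: "mpow b n ** w ** mpow bi n = w" for n
    using top b_inverse(1) by (intro conj_powers_commuting) (simp_all add: w_def lie_bracket_def)
  obtain \<beta> where lower: "\<And>n M. norm M \<le> \<beta> * norm (mpow a n ** M ** mpow ai n)"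
    and upper: "\<And>n M. norm (mpow a n ** M ** mpow ai n) \<le> \<beta> * norm M"
    using conj_a_bounds by metis
  have "(\<lambda>j. l ^ nk j *\<^sub>R (mpow a (nk j) ** w ** mpow ai (nk j))) \<longlonglongrightarrow> w"
    using projected_recurrence[of m l] by (simp add: projected_orbit fixed flip: w_def)
  from no_geometric_recurrence[OF lower upper assms(1) _ nk this] w assms(2)
  show False by (simp add: w_def)
qed

theorem commutes_diag: "y ** diag_mat d = diag_mat d ** y"
  unfolding commute_diag_mat_iff
proof (intro allI impI)
  fix i j assume y: "y $ i $ j \<noteq> 0"
  show "d i = d j"
  proof (rule ccontr)
    assume "d i \<noteq> d j"
    then have "d i / d j \<noteq> 1" and "0 < d i / d j"
      using d_pos[of i] d_pos[of j] by auto
    then have "weight_part d (d i / d j) y $ i $ j = 0"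
      by (simp add: weight_part_vanishes)
    with y show False by (simp add: weight_part_entry)
  qed
qed

text \<open>Finally \<open>y\<close> commutes with \<open>b\<close>: otherwise the top nonzero commutator \<open>w\<close> of \<open>y\<close>
  is sheared, \<open>b\<^sup>n w b\<^sup>-\<^sup>n = w + n z\<close> with \<open>z \<noteq> 0\<close>, contradicting recurrence.\<close>
theorem commutes_unipotent: "b ** y = y ** b"
proof (rule ccontr)
  assume "b ** y \<noteq> y ** b"
  then have nonzero: "lie_bracket b y \<noteq> 0" by (simp add: lie_bracket_def)
  obtain K where "\<And>M. (lie_bracket b ^^ K) M = 0"
    using unipotent_lie_bracket_nilpotent[OF b_unipotent] by blast
  then obtain m where m: "(lie_bracket b ^^ m) (lie_bracket b y) \<noteq> 0"
    and top: "lie_bracket b ((lie_bracket b ^^ m) (lie_bracket b y)) = 0"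
    using funpow_last_nonzero[OF _ nonzero] by metis
  define w where "w = (lie_bracket b ^^ m) y"
  have bw: "lie_bracket b w = (lie_bracket b ^^ m) (lie_bracket b y)"
    by (simp add: w_def funpow_swap1)
  define z where "z = lie_bracket b w ** bi"
  have shear: "mpow b n ** w ** mpow bi n = w + real n *\<^sub>R z" for n
    using conj_powers_shear[OF _ b_inverse] top by (simp add: bw z_def)
  have "weight_part d 1 y = y"
    by (rule weight_part_one[OF commutes_diag d_pos])
  then have "(\<lambda>j. mpow a (nk j) ** (w + real (nk j) *\<^sub>R z) ** mpow ai (nk j)) \<longlonglongrightarrow> w"
    using projected_recurrence[of m 1] by (simp add: projected_orbit shear flip: w_def)
  then have "convergent (\<lambda>j. mpow a (nk j) ** (w + real (nk j) *\<^sub>R z) ** mpow ai (nk j))"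
    by (rule convergentI)
  moreover obtain \<beta> where "\<And>n M. norm M \<le> \<beta> * norm (mpow a n ** M ** mpow ai n)"
    using conj_a_bounds by metis
  ultimately have "z = 0"
    using no_linear_recurrence[of \<beta> "\<lambda>n M. mpow a n ** M ** mpow ai n", OF _ nk] by blast
  moreover have "lie_bracket b w = z ** b"
    by (simp add: z_def matrix_mul_assoc[symmetric] b_inverse(2))
  ultimately have "lie_bracket b w = 0" by simp
  with m bw show False by simp
qed

end

lemma conj_map_iterate:
  assumes "invertible g"
  shows "(conj_map g ^^ n) x = mpow g n ** x ** mpow (matrix_inv g) n"
proof (induction n)
  case (Suc n)
  have "(conj_map g ^^ Suc n) x = g ** (mpow g n ** x ** mpow (matrix_inv g) n) ** matrix_inv g"
    by (simp add: Suc conj_map_def)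
  then show ?case
    by (simp only: mpow.simps(2)[of g] mpow_Suc_right[of "matrix_inv g"] matrix_mul_assoc)
qed simp

lemma conj_map_preserves_commute:
  assumes "h ** e = e ** h" and "invertible e" and "h ** y = y ** h"
  shows "h ** conj_map e y = conj_map e y ** h"
proof -
  have "h ** matrix_inv e = matrix_inv e ** h"
    using commute_inverse[OF assms(1) matrix_inv_cancel[OF assms(2)]] .
  then show ?thesis
    unfolding conj_map_def
    by (metis assms(1,3) matrix_mul_assoc)
qed

lemma similar_bounded_powers:
  fixes P Pi X :: "real^'n^'n"
  assumes "P ** Pi = mat 1" "Pi ** P = mat 1" and "bounded (range (mpow X))"
  shows "bounded (range (mpow (Pi ** X ** P)))"
proof -
  have "range (mpow (Pi ** X ** P)) = (\<lambda>M. Pi ** M ** P) ` range (mpow X)"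
    by (auto simp: similar_mpow[OF assms(1,2)])
  with bounded_linear_image[OF assms(3) sandwich_bounded_linear] show ?thesis by simp
qed

lemma similar_unipotent:
  fixes P Pi X :: "real^'n^'n"
  assumes "P ** Pi = mat 1" "Pi ** P = mat 1" and "unipotent X"
  shows "unipotent (Pi ** X ** P)"
proof -
  obtain k where k: "mpow (X - mat 1) k = 0"
    using assms(3) unfolding unipotent_def by blast
  have "Pi ** X ** P - mat 1 = Pi ** (X - mat 1) ** P"
    by (simp add: matrix_diff_ldistrib matrix_diff_rdistrib assms(2))
  then have "mpow (Pi ** X ** P - mat 1) k = 0"
    by (simp add: similar_mpow[OF assms(1,2)] k)
  then show ?thesis unfolding unipotent_def by blast
qed

lemma hyperbolic_diagonalise:
  fixes h :: "real^'n^'n"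
  assumes "hyperbolic h"
  obtains P Pi :: "real^'n^'n" and d where "P ** Pi = mat 1" "Pi ** P = mat 1"
    and "\<And>i. 0 < d i" and "Pi ** h ** P = diag_mat d"
proof -
  obtain P D :: "real^'n^'n" where P: "invertible P" and D: "is_diag D"
    and D_pos: "\<And>i. D $ i $ i > 0" and hP: "h ** P = P ** D"
    using assms unfolding hyperbolic_def by blast
  note PP = matrix_inv_cancel[OF P]
  have "matrix_inv P ** h ** P = matrix_inv P ** (h ** P)"
    by (simp add: matrix_mul_assoc)
  also have "\<dots> = D"
    by (simp add: hP matrix_mul_assoc PP)
  also have "D = diag_mat (\<lambda>i. D $ i $ i)"
    by (rule is_diag_eq_diag_mat[OF D])
  finally have "matrix_inv P ** h ** P = diag_mat (\<lambda>i. D $ i $ i)" .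
  with D_pos show ?thesis
    by (intro that[OF PP, of "\<lambda>i. D $ i $ i"]) simp_all
qed

subsection \<open>The multiplicative Jordan decomposition\<close>

locale jordan_decomposition =
  fixes g e h u :: "real^'n^'n"
  assumes elliptic: "elliptic e" and hyperbolic: "hyperbolic h" and unipotent: "unipotent u"
    and commute: "e ** h = h ** e" "e ** u = u ** e" "h ** u = u ** h"
    and decomposition: "g = e ** h ** u"
    and invertible: "invertible g"
begin

lemma factors_invertible: "invertible e" "invertible u"
proof -
  have "e ** (h ** u ** matrix_inv g) = mat 1" and "(matrix_inv g ** e ** h) ** u = mat 1"
    using matrix_inv_cancel[OF invertible] by (simp_all add: decomposition matrix_mul_assoc)
  then show "invertible e" "invertible u"
    using invertible_right_inverse invertible_left_inverse by blast+
qed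

lemma conj_map_on_centralizer:
  assumes "h ** x = x ** h" and "u ** x = x ** u"
  shows "conj_map g x = conj_map e x"
proof -
  have "e ** (h ** u ** matrix_inv g) = mat 1"
    using matrix_inv_cancel[OF invertible] by (simp add: decomposition matrix_mul_assoc)
  then have hu: "h ** u ** matrix_inv g = matrix_inv e"
    by (metis matrix_inv_cancel(2)[OF factors_invertible(1)] matrix_mul_assoc matrix_mul_lid
        matrix_mul_rid)
  have "conj_map g x = e ** (h ** (u ** x)) ** matrix_inv g"
    by (simp add: conj_map_def decomposition matrix_mul_assoc)
  also have "\<dots> = e ** x ** (h ** u ** matrix_inv g)"
    by (metis assms matrix_mul_assoc)
  finally show ?thesis by (simp add: hu conj_map_def)
qed

text \<open>Conjugation by \<open>e\<close> preserves the common centralizer, so the orbit of \<open>x\<close> under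
  \<open>conj_map g\<close> is its orbit under conjugation by powers of \<open>e\<close>.\<close>
lemma iterate_on_centralizer:
  assumes "h ** x = x ** h" and "u ** x = x ** u"
  shows "(conj_map g ^^ n) x = mpow e n ** x ** mpow (matrix_inv e) n"
proof -
  have "(conj_map g ^^ n) x = (conj_map e ^^ n) x
      \<and> h ** (conj_map e ^^ n) x = (conj_map e ^^ n) x ** h
      \<and> u ** (conj_map e ^^ n) x = (conj_map e ^^ n) x ** u"
  proof (induction n)
    case (Suc n)
    then show ?case
      using conj_map_preserves_commute[OF _ factors_invertible(1)] commute
      by (simp add: conj_map_on_centralizer)
  qed (simp add: assms)
  then show ?thesis
    by (simp add: conj_map_iterate[OF factors_invertible(1)])
qed

lemma elliptic_conj_recurrence:
  obtains nk where "filterlim nk at_top sequentially"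
    and "\<And>x. (\<lambda>k. mpow e (nk k) ** x ** mpow (matrix_inv e) (nk k)) \<longlonglongrightarrow> x"
proof -
  obtain nk where nk: "filterlim nk at_top sequentially"
    and e_lim: "(\<lambda>k. mpow e (nk k)) \<longlonglongrightarrow> mat 1"
    and ei_lim: "(\<lambda>k. mpow (matrix_inv e) (nk k)) \<longlonglongrightarrow> mat 1"
    using bounded_powers_return[OF elliptic_bounded_powers[OF elliptic]
        elliptic_bounded_powers[OF elliptic_inverse[OF elliptic factors_invertible(1)]]
        matrix_inv_cancel(2)[OF factors_invertible(1)]]
    by blast
  have "(\<lambda>k. mpow e (nk k) ** x ** mpow (matrix_inv e) (nk k)) \<longlonglongrightarrow> mat 1 ** x ** mat 1" for x
    by (intro bounded_bilinear.tendsto[OF matrix_mult_bounded_bilinear] e_lim ei_lim tendsto_const)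
  with nk that show ?thesis by simp
qed

text \<open>Conversely, a recurrent point commutes with \<open>h\<close> and \<open>u\<close>: diagonalise \<open>h\<close> and apply
  the normal-form result to the conjugated data.\<close>
lemma recurrent_commutes:
  assumes nk: "filterlim nk at_top sequentially"
    and lim: "(\<lambda>k. (conj_map g ^^ nk k) x) \<longlonglongrightarrow> x"
  shows "h ** x = x ** h" and "u ** x = x ** u"
proof -
  obtain P Pi :: "real^'n^'n" and d where PP: "P ** Pi = mat 1" "Pi ** P = mat 1"
    and d_pos: "\<And>i. 0 < d i" and h_diag: "Pi ** h ** P = diag_mat d"
    using hyperbolic_diagonalise[OF hyperbolic] by blast
  define sim where "sim X = Pi ** X ** P" for X
  have sim_mult: "sim X ** sim Y = sim (X ** Y)" for X Y
    by (simp add: sim_def similar_mult[OF PP(1)])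
  have sim_commute: "sim X ** sim Y = sim Y ** sim X \<longleftrightarrow> X ** Y = Y ** X" for X Y
    unfolding sim_def by (rule similar_commute_iff[OF PP(1)])
  have sim_one: "sim (mat 1) = mat 1" by (simp add: sim_def PP)
  have sim_h: "sim h = diag_mat d" by (simp add: sim_def h_diag)
  note inverse = matrix_inv_cancel[OF factors_invertible(1)]
    matrix_inv_cancel[OF factors_invertible(2)] matrix_inv_cancel[OF invertible]
  interpret jordan_recurrence "sim e" "sim (matrix_inv e)" "sim u" "sim (matrix_inv u)"
    "sim g" "sim (matrix_inv g)" "sim x" d nk
  proof
    show "sim e ** sim (matrix_inv e) = mat 1" "sim (matrix_inv e) ** sim e = mat 1"
      "sim u ** sim (matrix_inv u) = mat 1" "sim (matrix_inv u) ** sim u = mat 1"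
      "sim g ** sim (matrix_inv g) = mat 1"
      by (simp_all add: sim_mult inverse sim_one)
    show "sim g = sim e ** diag_mat d ** sim u"
      by (simp add: decomposition sim_mult flip: sim_h)
    show "bounded (range (mpow (sim e)))" "bounded (range (mpow (sim (matrix_inv e))))"
      unfolding sim_def using elliptic factors_invertible(1)
      by (intro similar_bounded_powers[OF PP] elliptic_bounded_powers elliptic_inverse; simp)+
    show "unipotent (sim u)"
      unfolding sim_def by (rule similar_unipotent[OF PP unipotent])
    show "sim e ** diag_mat d = diag_mat d ** sim e" "sim u ** diag_mat d = diag_mat d ** sim u"
      "sim e ** sim u = sim u ** sim e"
      using commute by (simp_all add: sim_commute flip: sim_h)
    have "(\<lambda>k. sim ((conj_map g ^^ nk k) x)) \<longlonglongrightarrow> sim x"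
      unfolding sim_def by (rule tendsto_sandwich[OF lim])
    then show "(\<lambda>k. mpow (sim g) (nk k) ** sim x ** mpow (sim (matrix_inv g)) (nk k)) \<longlonglongrightarrow> sim x"
      by (simp add: conj_map_iterate[OF invertible] sim_def similar_mpow[OF PP] similar_mult[OF PP(1)])
  qed (use d_pos nk in auto)
  show "h ** x = x ** h"
    using commutes_diag by (simp add: sim_commute flip: sim_h)
  show "u ** x = x ** u"
    using commutes_unipotent by (simp add: sim_commute)
qed

theorem recurrent_set_eq:
  "recurrent_set (conj_map g) G = centralizer G h \<inter> centralizer G u"
proof (intro equalityI subsetI)
  fix x assume "x \<in> recurrent_set (conj_map g) G"
  then show "x \<in> centralizer G h \<inter> centralizer G u"
    unfolding recurrent_set_def centralizer_def using recurrent_commutes by blast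
next
  fix x assume x: "x \<in> centralizer G h \<inter> centralizer G u"
  obtain nk where "filterlim nk at_top sequentially"
    and "\<And>x. (\<lambda>k. mpow e (nk k) ** x ** mpow (matrix_inv e) (nk k)) \<longlonglongrightarrow> x"
    using elliptic_conj_recurrence by blast
  with x show "x \<in> recurrent_set (conj_map g) G"
    unfolding recurrent_set_def centralizer_def by (auto simp: iterate_on_centralizer)
qed

text \<open>On the common centralizer, \<open>conj_map g\<close> acts as the first map of the recurrent,
  uniformly bounded family of conjugations by powers of \<open>e\<close>, hence is an isometry for
  the corresponding orbit norm.\<close>
theorem centralizer_isometric_metric:
  "\<exists>d. Metric_space (centralizer G h \<inter> centralizer G u) d
     \<and> Metric_space.mtopology (centralizer G h \<inter> centralizer G u) d
         = top_of_set (centralizer G h \<inter> centralizer G u)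
     \<and> (\<forall>x\<in>centralizer G h \<inter> centralizer G u. \<forall>y\<in>centralizer G h \<inter> centralizer G u.
           d (conj_map g x) (conj_map g y) = d x y)"
proof -
  define E where "E n x = mpow e n ** x ** mpow (matrix_inv e) n" for n x
  note e_inverse = matrix_inv_cancel[OF factors_invertible(1)]
  obtain \<beta> where bound: "\<And>n M. norm (E n M) \<le> \<beta> * norm M"
    using bounded_powers_conj_bounds[OF elliptic_bounded_powers[OF elliptic]
        elliptic_bounded_powers[OF elliptic_inverse[OF elliptic factors_invertible(1)]]
        e_inverse(2)]
    unfolding E_def by metis
  interpret recurrent_linear_family E \<beta>
  proof (rule recurrent_linear_family.intro)
    show "norm (E n x) \<le> \<beta> * norm x" for n x by (rule bound)
    show "linear (E n)" for n
      unfolding E_def using sandwich_bounded_linear bounded_linear.linear by blast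
    show "E 0 x = x" for x by (simp add: E_def)
    show "E n (E 1 x) = E (Suc n) x" for n x
      unfolding E_def mpow_Suc_right[of e n] mpow.simps(2)[of "matrix_inv e"]
      by (simp add: matrix_mul_assoc)
    obtain nk where "filterlim nk at_top sequentially"
      and "\<And>x. (\<lambda>k. mpow e (nk k) ** x ** mpow (matrix_inv e) (nk k)) \<longlonglongrightarrow> x"
      using elliptic_conj_recurrence by blast
    then show "\<exists>nk. filterlim nk at_top sequentially \<and> (\<lambda>j. E (nk j) x) \<longlonglongrightarrow> x" for x
      unfolding E_def by blast
  qed
  show ?thesis
  proof (rule isometric_metric)
    fix x assume "x \<in> centralizer G h \<inter> centralizer G u"
    then have "conj_map g x = conj_map e x"
      by (intro conj_map_on_centralizer) (auto simp: centralizer_def)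
    then show "conj_map g x = E 1 x"
      by (simp add: conj_map_def E_def)
  qed
qed

end

theorem lemma5p2:
  fixes G :: "(real^'n^'n) set" and g e h u :: "real^'n^'n"
  assumes "connected_semisimple_linear_group G"
    and "g \<in> G"
    and "elliptic e" and "hyperbolic h" and "unipotent u"
    and "e ** h = h ** e" and "e ** u = u ** e" and "h ** u = u ** h"
    and "g = e ** h ** u"
  shows "recurrent_set (conj_map g) G = centralizer G h \<inter> centralizer G u
    \<and> (\<exists>d. Metric_space (recurrent_set (conj_map g) G) d
           \<and> Metric_space.mtopology (recurrent_set (conj_map g) G) d
               = top_of_set (recurrent_set (conj_map g) G)
           \<and> (\<forall>x\<in>recurrent_set (conj_map g) G. \<forall>y\<in>recurrent_set (conj_map g) G.
                 d (conj_map g x) (conj_map g y) = d x y))"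
proof -
  have "invertible g"
    using assms(1,2) by (auto simp: connected_semisimple_linear_group_def matrix_subgroup_def)
  then interpret jordan_decomposition g e h u
    using assms(3-9) by unfold_locales
  show ?thesis
    using recurrent_set_eq[of G] centralizer_isometric_metric[of G] by simp
qed

end
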